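(* Fix an integer $n\geq1$ and a polynomial $f(q)\in\mathbb{Z}[q]$. Then $f(q)\in G_n\mathbb{Z}[q]$ if and only if $f(q)\in (1+q^m)^{\lfloor n/2m\rfloor}\mathbb{Z}[q]$ for all $1\leq m\leq \lfloor n/2\rfloor$, where $$G_n=\prod_{k=1}^{\lfloor\log_2 n\rfloor}\prod_{i=1}^{\lfloor n/2^k \rfloor}(1+q^i).$$ *)

theory Defs
  imports "HOL-Computational_Algebra.Polynomial" Complex_Main
begin

definition G :: "nat \<Rightarrow> int poly" where
  "G n = (\<Prod>k\<in>{1..nat \<lfloor>log 2 (real n)\<rfloor>}. \<Prod>i\<in>{1..n div 2 ^ k}. (1 + monom 1 i))"

end

theory Submission
  imports Defs "HOL-Computational_Algebra.Fundamental_Theorem_Algebra"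
begin

text \<open>
  A monic integer polynomial divides \<open>f\<close> iff it does so over \<open>\<complex>\<close>, where divisibility
  is decided by root multiplicities. The roots of \<open>1 + q\<^sup>m\<close> are simple and are the \<open>z\<close> with
  \<open>z\<^sup>m = -1\<close>. If \<open>h\<close> is the least positive exponent with \<open>z\<^sup>h = -1\<close>, then \<open>z\<^sup>i = -1\<close>
  exactly for the odd multiples \<open>i\<close> of \<open>h\<close>, so \<open>z\<close> is a root of \<open>G\<^sub>n\<close> of multiplicity
  \<open>\<Sum>\<^sub>k (\<lfloor>n/2\<^sup>kh\<rfloor> - \<lfloor>n/2\<^sup>k\<^sup>+\<^sup>1h\<rfloor>) = \<lfloor>n/2h\<rfloor>\<close>. This is also the largest multiplicity
  \<open>\<lfloor>n/2m\<rfloor>\<close> of \<open>z\<close> as a root of the factors \<open>(1 + q\<^sup>m)\<^bsup>\<lfloor>n/2m\<rfloor>\<^esup>\<close>, attained at \<open>m = h\<close>.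
\<close>

lemma map_poly_of_int_add:
  "map_poly (of_int :: int \<Rightarrow> 'a::comm_ring_1) (p + q) = map_poly of_int p + map_poly of_int q"
  by (rule poly_eqI) (simp add: coeff_map_poly)

lemma map_poly_of_int_mult:
  "map_poly (of_int :: int \<Rightarrow> 'a::comm_ring_1) (p * q) = map_poly of_int p * map_poly of_int q"
  by (rule poly_eqI) (simp add: coeff_map_poly coeff_mult)

lemma map_poly_of_int_power:
  "map_poly (of_int :: int \<Rightarrow> 'a::comm_ring_1) (p ^ k) = map_poly of_int p ^ k"
  by (induction k) (simp_all add: map_poly_of_int_mult)

lemma map_poly_of_int_prod:
  "map_poly (of_int :: int \<Rightarrow> 'a::comm_ring_1) (\<Prod>x\<in>A. f x) = (\<Prod>x\<in>A. map_poly of_int (f x))"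
  by (induction A rule: infinite_finite_induct) (simp_all add: map_poly_of_int_mult)

lemma map_poly_of_int_one_plus_monom:
  "map_poly (of_int :: int \<Rightarrow> 'a::comm_ring_1) (1 + monom 1 m) = 1 + monom 1 m"
  by (simp add: map_poly_of_int_add map_poly_monom)

lemma map_poly_of_int_eq_0_iff [simp]:
  "map_poly (of_int :: int \<Rightarrow> 'a::ring_char_0) p = 0 \<longleftrightarrow> p = 0"
  by (rule map_poly_eq_0_iff) auto

lemma degree_map_poly_of_int [simp]:
  "degree (map_poly (of_int :: int \<Rightarrow> 'a::ring_char_0) p) = degree p"
  by (rule degree_map_poly) simp

lemma monic_dvd_iff_map_poly_of_int_dvd:
  fixes g f :: "int poly"
  assumes monic: "lead_coeff g = 1"
  shows "g dvd f \<longleftrightarrow> map_poly (of_int :: int \<Rightarrow> 'a::{idom,ring_char_0}) g dvd map_poly of_int f"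
    (is "_ \<longleftrightarrow> ?c g dvd ?c f")
proof
  assume "g dvd f"
  then show "?c g dvd ?c f" by (auto elim!: dvdE simp: map_poly_of_int_mult)
next
  assume dvd: "?c g dvd ?c f"
  obtain q r where qr: "pseudo_divmod f g = (q, r)" by fastforce
  have "g \<noteq> 0" using monic by auto
  from pseudo_divmod[OF this qr] monic
  have f_eq: "f = g * q + r" and r: "r = 0 \<or> degree r < degree g" by auto
  from f_eq have "?c f = ?c g * ?c q + ?c r" by (simp add: map_poly_of_int_add map_poly_of_int_mult)
  with dvd have "?c g dvd ?c r" by (simp add: dvd_add_right_iff)
  then have "r = 0"
    using r dvd_imp_degree_le[of "?c g" "?c r"] by fastforce
  with f_eq show "g dvd f" by simp
qed

lemma alg_closed_poly_decompose:
  fixes p :: "'a::alg_closed_field poly"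
  shows "p = smult (lead_coeff p) (\<Prod>x\<in>#proots p. [:-x, 1:])"
proof (cases "p = 0")
  case False
  then obtain A where A: "p = smult (lead_coeff p) (\<Prod>x\<in>#A. [:-x, 1:])"
    using alg_closed_imp_factorization by blast
  have "proots (\<Prod>x\<in>#A. [:-x, 1:]) = A"
  proof (induction A)
    case (add x A)
    then show ?case by (simp only: image_mset_add_mset prod_mset.add_mset, subst proots_mult) auto
  qed simp
  with A False have "proots p = A" by (metis leading_coeff_0_iff proots_smult)
  with A show ?thesis by simp
qed simp

lemma alg_closed_dvd_iff_order_le:
  fixes p f :: "'a::alg_closed_field poly"
  assumes "p \<noteq> 0"
  shows "p dvd f \<longleftrightarrow> f = 0 \<or> (\<forall>z. order z p \<le> order z f)"
proof
  assume "p dvd f"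
  then show "f = 0 \<or> (\<forall>z. order z p \<le> order z f)" using assms dvd_imp_order_le by blast
next
  assume orders: "f = 0 \<or> (\<forall>z. order z p \<le> order z f)"
  show "p dvd f"
  proof (cases "f = 0")
    case False
    define P where "P = (\<Prod>x\<in>#proots p. [:-x, 1:])"
    from False orders assms have "proots p \<subseteq># proots f" by (simp add: subseteq_mset_def)
    then obtain D where D: "proots f = proots p + D" by (metis subset_mset.le_iff_add)
    have "smult (lead_coeff p) P dvd P" using assms by (simp add: smult_dvd_iff)
    then have "p dvd P" using alg_closed_poly_decompose[of p] by (simp add: P_def)
    also have "P dvd f"
      using alg_closed_poly_decompose[of f]
      by (metis D P_def dvd_smult dvd_triv_left prod_mset.union image_mset_union)
    finally show ?thesis .
  qed simp
qed

lemma order_prod: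
  fixes f :: "'b \<Rightarrow> 'a::idom poly"
  assumes "\<And>x. x \<in> A \<Longrightarrow> f x \<noteq> 0"
  shows "order z (\<Prod>x\<in>A. f x) = (\<Sum>x\<in>A. order z (f x))"
  using assms by (induction A rule: infinite_finite_induct) (auto simp: order_mult)

lemma order_power:
  fixes p :: "'a::idom poly"
  assumes "p \<noteq> 0"
  shows "order z (p ^ k) = k * order z p"
  using assms by (induction k) (auto simp: order_mult)

lemma lead_coeff_one_plus_monom:
  assumes "m \<ge> 1"
  shows "lead_coeff (1 + monom 1 m :: 'a::comm_ring_1 poly) = 1"
proof -
  have "degree (1 + monom 1 m :: 'a poly) = m"
    using assms by (subst degree_add_eq_right) (auto simp: degree_monom_eq)
  then show ?thesis using assms by simp
qed

lemma one_plus_monom_neq_0: "(1 + monom 1 m :: 'a::{idom,ring_char_0} poly) \<noteq> 0"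
proof
  assume "1 + monom 1 m = (0 :: 'a poly)"
  then have "poly (1 + monom 1 m) 0 = (0 :: 'a)" by simp
  then show False by (cases m) (simp_all add: poly_monom)
qed

lemma order_one_plus_monom:
  fixes z :: "'a::field_char_0"
  assumes "m \<ge> 1"
  shows "order z (1 + monom 1 m) = (if z ^ m = -1 then 1 else 0)"
proof -
  have "rsquarefree (1 + monom 1 m :: 'a poly)"
  proof (subst rsquarefree_roots, intro allI notI)
    fix a :: 'a
    assume root: "poly (1 + monom 1 m) a = 0 \<and> poly (pderiv (1 + monom 1 m)) a = 0"
    then have "a ^ m = -1" by (simp add: poly_monom add_eq_0_iff)
    then have "a \<noteq> 0" using assms by (auto simp: power_0_left)
    moreover have "of_nat m * a ^ (m - 1) = 0"
      using root by (simp add: pderiv_add pderiv_monom poly_monom)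
    ultimately show False using assms by simp
  qed
  moreover have "poly (1 + monom 1 m) z = 0 \<longleftrightarrow> z ^ m = -1"
    by (simp add: poly_monom add_eq_0_iff)
  ultimately show ?thesis
    using one_plus_monom_neq_0 rsquarefree_root_order order_0I by metis
qed

lemma mod_double_eq_iff_dvd_not_dvd:
  fixes i h :: nat
  assumes "0 < h"
  shows "i mod (2 * h) = h \<longleftrightarrow> h dvd i \<and> \<not> 2 * h dvd i"
proof -
  have "h dvd i \<longleftrightarrow> h dvd i mod (2 * h)"
    by (simp add: dvd_mod_iff)
  moreover have "h dvd r \<longleftrightarrow> r = 0 \<or> r = h" if "r < 2 * h" for r
    using that by (auto elim!: dvdE simp: less_2_cases_iff)
  ultimately show ?thesis
    using assms by (auto simp: dvd_eq_mod_eq_0)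
qed

lemma power_eq_minus_one_iff_odd_multiple:
  fixes z :: "'a::ring_char_0"
  assumes "0 < h" and "z ^ h = -1" and least: "\<And>i. 0 < i \<Longrightarrow> i < h \<Longrightarrow> z ^ i \<noteq> -1"
  shows "z ^ i = -1 \<longleftrightarrow> h dvd i \<and> \<not> 2 * h dvd i"
proof -
  define r where "r = i mod (2 * h)"
  have r_less: "r < 2 * h" using assms(1) by (simp add: r_def)
  have "z ^ (2 * h) = (z ^ h) ^ 2" by (metis power_mult mult.commute)
  with assms(2) have period: "z ^ (2 * h) = 1" by simp
  have "i = 2 * h * (i div (2 * h)) + r" by (simp add: r_def)
  then have "z ^ i = z ^ (2 * h * (i div (2 * h)) + r)" by (rule arg_cong)
  also have "\<dots> = (z ^ (2 * h)) ^ (i div (2 * h)) * z ^ r" by (simp only: power_add power_mult)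
  finally have z_i: "z ^ i = z ^ r" using period by simp
  have "z ^ r = -1 \<longleftrightarrow> r = h"
  proof
    assume z_r: "z ^ r = -1"
    then have "r \<noteq> 0" using one_neq_neg_one by (metis power_0)
    with least[of r] z_r have "h \<le> r" by (meson neq0_conv not_le)
    moreover have "\<not> h < r"
    proof
      assume "h < r"
      have "(2 * h - r) + r = 2 * h" using r_less by simp
      then have "z ^ (2 * h - r) * z ^ r = 1" by (metis power_add period)
      with z_r have "z ^ (2 * h - r) = -1" by (metis mult_minus1_right minus_equation_iff)
      with least[of "2 * h - r"] \<open>h < r\<close> r_less show False by linarith
    qed
    ultimately show "r = h" by simp
  qed (use assms(2) in simp)
  with z_i show ?thesis
    by (simp only: r_def mod_double_eq_iff_dvd_not_dvd[OF assms(1)])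
qed

lemma card_multiples:
  fixes h N :: nat
  assumes "0 < h"
  shows "card {i \<in> {1..N}. h dvd i} = N div h"
proof -
  have "{i \<in> {1..N}. h dvd i} = (\<lambda>t. h * t) ` {1..N div h}"
    using assms by (auto elim!: dvdE simp: less_eq_div_iff_mult_less_eq mult.commute)
  moreover have "inj_on (\<lambda>t. h * t) {1..N div h}" using assms by (simp add: inj_on_def)
  ultimately show ?thesis by (simp add: card_image)
qed

lemma card_odd_multiples:
  fixes h N :: nat
  assumes "0 < h"
  shows "card {i \<in> {1..N}. h dvd i \<and> \<not> 2 * h dvd i} = N div h - N div (2 * h)"
proof -
  have sub: "{i \<in> {1..N}. 2 * h dvd i} \<subseteq> {i \<in> {1..N}. h dvd i}"
    by (auto dest: dvd_mult_right)
  have "card {i \<in> {1..N}. h dvd i \<and> \<not> 2 * h dvd i} =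
      card ({i \<in> {1..N}. h dvd i} - {i \<in> {1..N}. 2 * h dvd i})"
    by (rule arg_cong[where f = card]) blast
  also have "\<dots> = card {i \<in> {1..N}. h dvd i} - card {i \<in> {1..N}. 2 * h dvd i}"
    by (rule card_Diff_subset[OF _ sub]) simp
  also have "\<dots> = N div h - N div (2 * h)"
    using assms by (simp only: card_multiples mult_pos_pos zero_less_numeral)
  finally show ?thesis .
qed

lemma sum_telescope_antimono_nat:
  fixes a :: "nat \<Rightarrow> nat"
  assumes "\<And>k. a (Suc k) \<le> a k"
  shows "(\<Sum>k\<in>{1..L}. a k - a (Suc k)) = a 1 - a (Suc L)"
proof (induction L)
  case (Suc L)
  have "a (Suc (Suc L)) \<le> a (Suc L)" "a (Suc L) \<le> a 1"
    using assms lift_Suc_antimono_le[of a] by auto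
  with Suc show ?case by simp
qed simp

lemma sum_card_odd_multiples_dyadic:
  fixes h n L :: nat
  assumes "0 < h" and "n < 2 ^ Suc L"
  shows "(\<Sum>k\<in>{1..L}. card {i \<in> {1..n div 2 ^ k}. h dvd i \<and> \<not> 2 * h dvd i}) = n div (2 * h)"
proof -
  define a where "a k = n div 2 ^ k div h" for k
  have "card {i \<in> {1..n div 2 ^ k}. h dvd i \<and> \<not> 2 * h dvd i} = a k - a (Suc k)" for k
  proof -
    have "card {i \<in> {1..n div 2 ^ k}. h dvd i \<and> \<not> 2 * h dvd i} = n div 2 ^ k div h - n div 2 ^ k div (2 * h)"
      by (rule card_odd_multiples[OF assms(1)])
    also have "n div 2 ^ k div (2 * h) = a (Suc k)"
      by (simp only: a_def power_Suc2 div_mult2_eq)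
    finally show ?thesis by (simp only: a_def)
  qed
  then have "(\<Sum>k\<in>{1..L}. card {i \<in> {1..n div 2 ^ k}. h dvd i \<and> \<not> 2 * h dvd i}) =
      (\<Sum>k\<in>{1..L}. a k - a (Suc k))"
    by (rule sum.cong[OF refl])
  also have "\<dots> = a 1 - a (Suc L)"
    by (rule sum_telescope_antimono_nat) (simp add: a_def div_le_mono div_le_mono2)
  also have "\<dots> = n div (2 * h)"
    using assms(2) by (simp add: a_def div_mult2_eq)
  finally show ?thesis .
qed

lemma less_two_power_Suc_floor_log:
  fixes n :: nat
  assumes "n \<ge> 1"
  shows "n < 2 ^ Suc (nat \<lfloor>log 2 (real n)\<rfloor>)"
proof -
  have "\<lfloor>log 2 (real n)\<rfloor> = int (nat \<lfloor>log 2 (real n)\<rfloor>)" using assms by simp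
  then show ?thesis
    using floor_log_nat_eq_powr_iff[of 2 n "nat \<lfloor>log 2 (real n)\<rfloor>"] assms by simp
qed

lemma sum_card_power_eq_minus_one_le_iff:
  fixes z :: "'a::ring_char_0" and n w :: nat
  assumes "n \<ge> 1"
  shows "(\<Sum>k\<in>{1..nat \<lfloor>log 2 (real n)\<rfloor>}. card {i \<in> {1..n div 2 ^ k}. z ^ i = -1}) \<le> w \<longleftrightarrow>
    (\<forall>m\<in>{1..n div 2}. z ^ m = -1 \<longrightarrow> n div (2 * m) \<le> w)"
proof (cases "\<exists>h>0. z ^ h = -1")
  case False
  then have no_root: "z ^ i \<noteq> -1" if "1 \<le> i" for i
    using that by (metis less_le_trans zero_less_one)
  then have "{i \<in> {1..N}. z ^ i = -1} = {}" for N by auto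
  then have sum_0: "(\<Sum>k\<in>{1..nat \<lfloor>log 2 (real n)\<rfloor>}. card {i \<in> {1..n div 2 ^ k}. z ^ i = -1}) = 0"
    by (simp only: card.empty sum.neutral_const)
  show ?thesis
    unfolding sum_0 using no_root by auto
next
  case True
  define h where "h = (LEAST h. 0 < h \<and> z ^ h = -1)"
  have h: "0 < h" "z ^ h = -1"
    using LeastI_ex[OF True] by (simp_all add: h_def)
  have least: "h \<le> i" if "0 < i" "z ^ i = -1" for i
    using that by (simp add: h_def Least_le)
  have "{i \<in> {1..N}. z ^ i = -1} = {i \<in> {1..N}. h dvd i \<and> \<not> 2 * h dvd i}" for N
    using power_eq_minus_one_iff_odd_multiple[OF h] least by (metis not_less)
  then have sum_eq: "(\<Sum>k\<in>{1..nat \<lfloor>log 2 (real n)\<rfloor>}. card {i \<in> {1..n div 2 ^ k}. z ^ i = -1}) = n div (2 * h)"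
    using sum_card_odd_multiples_dyadic[OF h(1) less_two_power_Suc_floor_log[OF assms]] by simp
  have "(\<forall>m\<in>{1..n div 2}. z ^ m = -1 \<longrightarrow> n div (2 * m) \<le> w) \<longleftrightarrow> n div (2 * h) \<le> w"
  proof
    assume "\<forall>m\<in>{1..n div 2}. z ^ m = -1 \<longrightarrow> n div (2 * m) \<le> w"
    then show "n div (2 * h) \<le> w"
      using h by (cases "h \<le> n div 2") (auto simp: div_eq_0_iff)
  next
    assume "n div (2 * h) \<le> w"
    moreover have "n div (2 * m) \<le> n div (2 * h)" if "m \<ge> 1" "z ^ m = -1" for m
      using least[of m] that h(1) by (intro div_le_mono2) auto
    ultimately show "\<forall>m\<in>{1..n div 2}. z ^ m = -1 \<longrightarrow> n div (2 * m) \<le> w"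
      by fastforce
  qed
  with sum_eq show ?thesis by simp
qed

lemma monic_int_poly_dvd_iff_order_le:
  fixes g f :: "int poly"
  assumes "lead_coeff g = 1"
  shows "g dvd f \<longleftrightarrow>
    f = 0 \<or> (\<forall>z::complex. order z (map_poly of_int g) \<le> order z (map_poly of_int f))"
proof -
  have "g dvd f \<longleftrightarrow> map_poly of_int g dvd (map_poly of_int f :: complex poly)"
    by (rule monic_dvd_iff_map_poly_of_int_dvd[OF assms])
  also have "\<dots> \<longleftrightarrow>
      f = 0 \<or> (\<forall>z::complex. order z (map_poly of_int g) \<le> order z (map_poly of_int f))"
    using assms by (subst alg_closed_dvd_iff_order_le) auto
  finally show ?thesis .
qed

lemma power_one_plus_monom_dvd_iff:
  fixes f :: "int poly"
  assumes "m \<ge> 1" and "f \<noteq> 0"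
  shows "(1 + monom 1 m) ^ e dvd f \<longleftrightarrow>
    (\<forall>z::complex. z ^ m = -1 \<longrightarrow> e \<le> order z (map_poly of_int f))"
proof -
  have "lead_coeff ((1 + monom 1 m :: int poly) ^ e) = 1"
    by (simp only: lead_coeff_power lead_coeff_one_plus_monom[OF assms(1)] power_one)
  moreover have "order z (map_poly of_int ((1 + monom 1 m) ^ e)) = (if z ^ m = -1 then e else 0)"
    for z :: complex
    using assms(1) by (simp add: map_poly_of_int_power map_poly_of_int_one_plus_monom
        one_plus_monom_neq_0 order_power order_one_plus_monom)
  ultimately show ?thesis
    using assms(2) monic_int_poly_dvd_iff_order_le by auto
qed

lemma lead_coeff_G: "lead_coeff (G n) = 1"
  unfolding G_def lead_coeff_prod by (intro prod.neutral ballI lead_coeff_one_plus_monom) simp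

lemma order_map_poly_of_int_G:
  fixes z :: "'a::field_char_0"
  shows "order z (map_poly of_int (G n)) =
    (\<Sum>k\<in>{1..nat \<lfloor>log 2 (real n)\<rfloor>}. card {i \<in> {1..n div 2 ^ k}. z ^ i = -1})"
proof -
  have "map_poly of_int (G n) =
      (\<Prod>k\<in>{1..nat \<lfloor>log 2 (real n)\<rfloor>}. \<Prod>i\<in>{1..n div 2 ^ k}. (1 + monom 1 i :: 'a poly))"
    unfolding G_def map_poly_of_int_prod map_poly_of_int_one_plus_monom ..
  moreover have "(\<Prod>i\<in>I. (1 + monom 1 i :: 'a poly)) \<noteq> 0" for I
    by (cases "finite I") (simp_all add: one_plus_monom_neq_0)
  ultimately have "order z (map_poly of_int (G n)) =
      (\<Sum>k\<in>{1..nat \<lfloor>log 2 (real n)\<rfloor>}. \<Sum>i\<in>{1..n div 2 ^ k}. order z (1 + monom 1 i :: 'a poly))"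
    by (simp add: order_prod one_plus_monom_neq_0)
  also have "\<dots> = (\<Sum>k\<in>{1..nat \<lfloor>log 2 (real n)\<rfloor>}. \<Sum>i\<in>{1..n div 2 ^ k}. if z ^ i = -1 then 1 else 0)"
    by (intro sum.cong refl) (simp add: order_one_plus_monom)
  finally show ?thesis by (simp add: sum.inter_filter[symmetric])
qed

theorem theorem4p1:
  fixes n :: nat and f :: "int poly"
  assumes "n \<ge> 1"
  shows "G n dvd f \<longleftrightarrow>
    (\<forall>m\<in>{1..n div 2}. (1 + monom 1 m) ^ (n div (2 * m)) dvd f)"
proof (cases "f = 0")
  case False
  let ?ord = "\<lambda>z::complex. order z (map_poly of_int f)"
  have "G n dvd f \<longleftrightarrow>
      (\<forall>z. (\<Sum>k\<in>{1..nat \<lfloor>log 2 (real n)\<rfloor>}. card {i \<in> {1..n div 2 ^ k}. z ^ i = -1}) \<le> ?ord z)"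
    using monic_int_poly_dvd_iff_order_le[OF lead_coeff_G] False by (simp add: order_map_poly_of_int_G)
  also have "\<dots> \<longleftrightarrow> (\<forall>z. \<forall>m\<in>{1..n div 2}. z ^ m = -1 \<longrightarrow> n div (2 * m) \<le> ?ord z)"
    by (simp only: sum_card_power_eq_minus_one_le_iff[OF assms])
  also have "\<dots> \<longleftrightarrow> (\<forall>m\<in>{1..n div 2}. (1 + monom 1 m) ^ (n div (2 * m)) dvd f)"
    using power_one_plus_monom_dvd_iff False by auto
  finally show ?thesis .
qed simp

end
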